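(* Let $\tau\ge1$ and consider two candidates $P,Q$, where only the preferred candidate of each voter with preference strength at least $\tau$ is known. Weighted Majority Rule 3 (defined in the context) has distortion at most $\max\{\frac{\tau+2}{\tau},\tau\}$, and no deterministic mechanism using only this information can achieve a smaller worst-case distortion.
   Context: Voters $N=\{1,\dots,n\}$ and candidates are points of an arbitrary metric space $(X,d)$. Voter $i$ prefers $P$ to $Q$ only if $d(i,P)\le d(i,Q)$; $SC(Y)=\sum_{i\in N}d(i,Y)$; distortion of a winner is its social cost divided by the minimum social cost over the candidates, and a mechanism's distortion is the supremum over instances. Let $A=\{i: d(i,Q)/d(i,P)\ge\tau\}$, $B=\{j: d(j,P)/d(j,Q)\ge\tau\}$, and $C$ the remaining voters; the available information consists only of the sets $A$ and $B$ (nothing is known about voters in $C$). Weighted Majority Rule 3: voters in $A\cup B$ get weight $1$, voters in $C$ weight $0$; select $P$ if $|A|\ge|B|$ and $Q$ otherwise. *)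

theory Defs
  imports Complex_Main
begin

definition metric_on :: "'a set \<Rightarrow> ('a \<Rightarrow> 'a \<Rightarrow> real) \<Rightarrow> bool" where
  "metric_on X d \<longleftrightarrow>
     (\<forall>x\<in>X. \<forall>y\<in>X. 0 \<le> d x y \<and> (d x y = 0 \<longleftrightarrow> x = y) \<and> d x y = d y x) \<and>
     (\<forall>x\<in>X. \<forall>y\<in>X. \<forall>z\<in>X. d x z \<le> d x y + d y z)"

definition SC :: "('a \<Rightarrow> 'a \<Rightarrow> real) \<Rightarrow> nat \<Rightarrow> (nat \<Rightarrow> 'a) \<Rightarrow> 'a \<Rightarrow> real" where
  "SC d n v Y = (\<Sum>i=1..n. d (v i) Y)"

text \<open>Voters whose preference for P has strength at least tau:
  d(i,Q)/d(i,P) \<ge> tau, written multiplicatively (d(i,P)=0 counts as infinite ratio).\<close>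
definition setA :: "real \<Rightarrow> ('a \<Rightarrow> 'a \<Rightarrow> real) \<Rightarrow> nat \<Rightarrow> (nat \<Rightarrow> 'a) \<Rightarrow> 'a \<Rightarrow> 'a \<Rightarrow> nat set" where
  "setA \<tau> d n v P Q = {i \<in> {1..n}. d (v i) Q \<ge> \<tau> * d (v i) P}"

definition setB :: "real \<Rightarrow> ('a \<Rightarrow> 'a \<Rightarrow> real) \<Rightarrow> nat \<Rightarrow> (nat \<Rightarrow> 'a) \<Rightarrow> 'a \<Rightarrow> 'a \<Rightarrow> nat set" where
  "setB \<tau> d n v P Q = {j \<in> {1..n}. d (v j) P \<ge> \<tau> * d (v j) Q}"

text \<open>Weighted Majority Rule 3: weight 1 on A \<union> B, 0 on C; select P iff |A| \<ge> |B|.\<close>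
definition WMR3 :: "real \<Rightarrow> ('a \<Rightarrow> 'a \<Rightarrow> real) \<Rightarrow> nat \<Rightarrow> (nat \<Rightarrow> 'a) \<Rightarrow> 'a \<Rightarrow> 'a \<Rightarrow> 'a" where
  "WMR3 \<tau> d n v P Q =
     (if card (setA \<tau> d n v P Q) \<ge> card (setB \<tau> d n v P Q) then P else Q)"

definition distortion :: "('a \<Rightarrow> 'a \<Rightarrow> real) \<Rightarrow> nat \<Rightarrow> (nat \<Rightarrow> 'a) \<Rightarrow> 'a \<Rightarrow> 'a \<Rightarrow> 'a \<Rightarrow> real" where
  "distortion d n v P Q W = SC d n v W / min (SC d n v P) (SC d n v Q)"

text \<open>Valid valid_instance: n voters and candidates P, Q are points of the metric space (X,d),
  with positive optimal social cost (so that the distortion ratio is defined).\<close>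
definition valid_instance :: "'a set \<Rightarrow> ('a \<Rightarrow> 'a \<Rightarrow> real) \<Rightarrow> nat \<Rightarrow> (nat \<Rightarrow> 'a) \<Rightarrow> 'a \<Rightarrow> 'a \<Rightarrow> bool" where
  "valid_instance X d n v P Q \<longleftrightarrow> metric_on X d \<and> v ` {1..n} \<subseteq> X \<and> P \<in> X \<and> Q \<in> X \<and>
     0 < min (SC d n v P) (SC d n v Q)"

end

theory Submission imports Defs begin

text \<open>Upper bound: summing the per-voter estimate
  \<open>d(i,P) - M d(i,Q) \<le> d(P,Q) ([i \<in> B] - [i \<in> A])\<close> with \<open>M = max ((\<tau>+2)/\<tau>) \<tau>\<close>
  gives \<open>SC(P) - M SC(Q) \<le> d(P,Q) (|B| - |A|) \<le> 0\<close> whenever \<open>P\<close> wins.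
  Lower bound: two line instances with the same sets \<open>A\<close> and \<open>B\<close> in which \<open>P\<close>, resp. \<open>Q\<close>,
  is the bad choice; for \<open>(\<tau>+2)/\<tau>\<close> two voters suffice (one strongly for the far candidate,
  one at the near one), for \<open>\<tau>\<close> a single voter with a weak preference.\<close>

lemma metric_on_abs_diff_le:
  assumes "metric_on X d" "x \<in> X" "y \<in> X" "z \<in> X"
  shows "\<bar>d x y - d x z\<bar> \<le> d y z"
  using assms unfolding metric_on_def by (smt (verit))

lemma metric_on_le_add:
  assumes "metric_on X d" "x \<in> X" "y \<in> X" "z \<in> X"
  shows "d y z \<le> d x y + d x z"
  using assms unfolding metric_on_def by (smt (verit))

lemma voter_cost_bound:
  fixes \<tau> M p q D :: real
  assumes \<tau>: "1 \<le> \<tau>" "\<tau> \<le> M" "\<tau> + 2 \<le> \<tau> * M"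
    and tri: "\<bar>p - q\<bar> \<le> D" "D \<le> p + q"
  shows "p - M * q \<le> D * (of_bool (\<tau> * q \<le> p) - of_bool (\<tau> * p \<le> q))"
proof -
  have "0 \<le> q" "0 \<le> D" using tri by linarith+
  consider (A) "\<tau> * p \<le> q" | (B) "\<not> \<tau> * p \<le> q" "\<tau> * q \<le> p"
    | (C) "\<not> \<tau> * p \<le> q" "\<not> \<tau> * q \<le> p" by blast
  then show ?thesis
  proof cases
    case A
    have "\<tau> * (2 * p + q) \<le> (\<tau> + 2) * q" using A by (simp add: algebra_simps)
    also have "\<dots> \<le> \<tau> * (M * q)" using \<tau>(3) \<open>0 \<le> q\<close> by (simp add: mult_right_mono mult.assoc[symmetric])
    finally have "2 * p + q \<le> M * q" using \<tau>(1) by simp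
    then have "p - M * q \<le> - D" using tri by linarith
    then show ?thesis using A \<open>0 \<le> D\<close> by auto
  next
    case B
    have "q \<le> M * q" using \<tau> \<open>0 \<le> q\<close> by (simp add: mult_le_cancel_right1)
    then show ?thesis using B tri by simp
  next
    case C
    have "\<tau> * q \<le> M * q" using \<tau>(2) \<open>0 \<le> q\<close> by (rule mult_right_mono)
    then show ?thesis using C by simp
  qed
qed

lemma card_setA_eq_sum:
  "real (card (setA \<tau> d n v P Q)) = (\<Sum>i=1..n. of_bool (\<tau> * d (v i) P \<le> d (v i) Q))"
  by (simp add: setA_def Int_def)

lemma card_setB_eq_sum:
  "real (card (setB \<tau> d n v P Q)) = (\<Sum>i=1..n. of_bool (\<tau> * d (v i) Q \<le> d (v i) P))"
  by (simp add: setB_def Int_def)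

lemma setA_swap: "setA \<tau> d n v Q P = setB \<tau> d n v P Q"
  unfolding setA_def setB_def ..

lemma setB_swap: "setB \<tau> d n v Q P = setA \<tau> d n v P Q"
  unfolding setA_def setB_def ..

lemma SC_le_if_card_setB_le_card_setA:
  fixes \<tau> M :: real
  assumes \<tau>: "1 \<le> \<tau>" "\<tau> \<le> M" "\<tau> + 2 \<le> \<tau> * M"
    and met: "metric_on X d" and vX: "v ` {1..n} \<subseteq> X" and "P \<in> X" "Q \<in> X"
    and card: "card (setB \<tau> d n v P Q) \<le> card (setA \<tau> d n v P Q)"
  shows "SC d n v P \<le> M * SC d n v Q"
proof -
  let ?D = "d P Q"
  have "0 \<le> ?D" using met \<open>P \<in> X\<close> \<open>Q \<in> X\<close> unfolding metric_on_def by blast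
  have "SC d n v P - M * SC d n v Q = (\<Sum>i=1..n. d (v i) P - M * d (v i) Q)"
    by (simp add: SC_def sum_subtractf sum_distrib_left)
  also have "\<dots> \<le> (\<Sum>i=1..n. ?D * (of_bool (\<tau> * d (v i) Q \<le> d (v i) P)
                                       - of_bool (\<tau> * d (v i) P \<le> d (v i) Q)))"
  proof (rule sum_mono)
    fix i assume "i \<in> {1..n}"
    then have "v i \<in> X" using vX by auto
    then show "d (v i) P - M * d (v i) Q \<le> ?D * (of_bool (\<tau> * d (v i) Q \<le> d (v i) P)
                                       - of_bool (\<tau> * d (v i) P \<le> d (v i) Q))"
      using \<tau> metric_on_abs_diff_le[OF met] metric_on_le_add[OF met] \<open>P \<in> X\<close> \<open>Q \<in> X\<close>
      by (intro voter_cost_bound) auto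
  qed
  also have "\<dots> = ?D * (real (card (setB \<tau> d n v P Q)) - real (card (setA \<tau> d n v P Q)))"
    unfolding card_setA_eq_sum card_setB_eq_sum sum_subtractf[symmetric] sum_distrib_left ..
  also have "\<dots> \<le> 0"
    using card \<open>0 \<le> ?D\<close> by (intro mult_nonneg_nonpos) auto
  finally show ?thesis by simp
qed

lemma divide_min_le:
  fixes w z M :: real
  assumes "0 < min w z" "w \<le> M * z" "1 \<le> M"
  shows "w / min w z \<le> M"
proof (cases "w \<le> z")
  case True
  then show ?thesis using assms by simp
next
  case False
  then show ?thesis using assms by (simp add: pos_divide_le_eq)
qed

lemma distortion_WMR3_le:
  fixes \<tau> :: real
  assumes "1 \<le> \<tau>" and val: "valid_instance X d n v P Q"
  shows "distortion d n v P Q (WMR3 \<tau> d n v P Q) \<le> max ((\<tau> + 2) / \<tau>) \<tau>"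
proof -
  define M where "M = max ((\<tau> + 2) / \<tau>) \<tau>"
  have "\<tau> \<le> M" "(\<tau> + 2) / \<tau> \<le> M" by (simp_all add: M_def)
  then have M: "\<tau> \<le> M" "\<tau> + 2 \<le> \<tau> * M" "1 \<le> M"
    using \<open>1 \<le> \<tau>\<close> by (simp_all add: pos_divide_le_eq mult.commute)
  have inst: "metric_on X d" "v ` {1..n} \<subseteq> X" "P \<in> X" "Q \<in> X"
    and pos: "0 < min (SC d n v P) (SC d n v Q)"
    using val unfolding valid_instance_def by blast+
  show ?thesis
  proof (cases "card (setB \<tau> d n v P Q) \<le> card (setA \<tau> d n v P Q)")
    case True
    then have "SC d n v P \<le> M * SC d n v Q"
      by (rule SC_le_if_card_setB_le_card_setA[OF \<open>1 \<le> \<tau>\<close> M(1,2) inst])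
    then have "SC d n v P / min (SC d n v P) (SC d n v Q) \<le> M"
      by (rule divide_min_le[OF pos _ M(3)])
    then show ?thesis
      unfolding distortion_def WMR3_def M_def[symmetric] using True by simp
  next
    case False
    then have "card (setB \<tau> d n v Q P) \<le> card (setA \<tau> d n v Q P)"
      unfolding setB_swap[of \<tau> d n v Q P] setA_swap[of \<tau> d n v Q P] by simp
    then have "SC d n v Q \<le> M * SC d n v P"
      by (rule SC_le_if_card_setB_le_card_setA[OF \<open>1 \<le> \<tau>\<close> M(1,2) inst(1,2,4,3)])
    then have "SC d n v Q / min (SC d n v Q) (SC d n v P) \<le> M"
      using pos M(3) by (intro divide_min_le) (simp_all add: min.commute)
    then show ?thesis
      unfolding distortion_def WMR3_def M_def[symmetric] using False by (simp add: min.commute)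
  qed
qed

lemma metric_on_line:
  "inj_on f X \<Longrightarrow> metric_on X (\<lambda>x y. \<bar>f x - f y\<bar>)"
  unfolding metric_on_def inj_on_def by auto

lemma mechanism_distortion_gt_of_indistinguishable:
  fixes X\<^sub>1 X\<^sub>2 :: "'a set"
  assumes "valid_instance X\<^sub>1 d\<^sub>1 n v\<^sub>1 P\<^sub>1 Q\<^sub>1" "valid_instance X\<^sub>2 d\<^sub>2 n v\<^sub>2 P\<^sub>2 Q\<^sub>2"
    and "setA \<tau> d\<^sub>1 n v\<^sub>1 P\<^sub>1 Q\<^sub>1 = setA \<tau> d\<^sub>2 n v\<^sub>2 P\<^sub>2 Q\<^sub>2"
    and "setB \<tau> d\<^sub>1 n v\<^sub>1 P\<^sub>1 Q\<^sub>1 = setB \<tau> d\<^sub>2 n v\<^sub>2 P\<^sub>2 Q\<^sub>2"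
    and "distortion d\<^sub>1 n v\<^sub>1 P\<^sub>1 Q\<^sub>1 P\<^sub>1 > \<rho>" "distortion d\<^sub>2 n v\<^sub>2 P\<^sub>2 Q\<^sub>2 Q\<^sub>2 > \<rho>"
  shows "\<exists>(X :: 'a set) d n v P Q. valid_instance X d n v P Q \<and>
           distortion d n v P Q (if mech n (setA \<tau> d n v P Q) (setB \<tau> d n v P Q) then P else Q) > \<rho>"
proof (cases "mech n (setA \<tau> d\<^sub>1 n v\<^sub>1 P\<^sub>1 Q\<^sub>1) (setB \<tau> d\<^sub>1 n v\<^sub>1 P\<^sub>1 Q\<^sub>1)")
  case True
  with assms show ?thesis
    by (intro exI[of _ X\<^sub>1] exI[of _ d\<^sub>1] exI[of _ n] exI[of _ v\<^sub>1] exI[of _ P\<^sub>1] exI[of _ Q\<^sub>1]) simp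
next
  case False
  with assms show ?thesis
    by (intro exI[of _ X\<^sub>2] exI[of _ d\<^sub>2] exI[of _ n] exI[of _ v\<^sub>2] exI[of _ P\<^sub>2] exI[of _ Q\<^sub>2]) simp
qed

lemma mechanism_distortion_gt_of_lt_ratio:
  fixes \<tau> \<rho> :: real
  assumes "1 \<le> \<tau>" "\<rho> < (\<tau> + 2) / \<tau>"
  shows "\<exists>(X :: nat set) d n v P Q. valid_instance X d n v P Q \<and>
           distortion d n v P Q (if mech n (setA \<tau> d n v P Q) (setB \<tau> d n v P Q) then P else Q) > \<rho>"
proof -
  have "max ((\<rho> - 1) / 2) 0 < 1 / \<tau>"
    using assms by (auto simp: field_simps)
  then obtain w where w: "(\<rho> - 1) / 2 < w" "0 < w" "w < 1 / \<tau>"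
    using dense by (metis max_less_iff_conj)
  have "\<tau> * w < 1" using w(3) \<open>1 \<le> \<tau>\<close> by (simp add: field_simps)
  then have "w < \<tau>" using \<open>1 \<le> \<tau>\<close> w(2) by (smt (verit) mult_le_cancel_right1)
  \<comment> \<open>points \<open>0, 1, 2\<close> at \<open>0, 1, 1 + w\<close>: candidates at \<open>0\<close> and \<open>2\<close>, one voter at \<open>1\<close>
    strongly preferring \<open>2\<close>, one voter on candidate \<open>0\<close>\<close>
  define f :: "nat \<Rightarrow> real" where "f k = (if k = 0 then 0 else if k = 1 then 1 else 1 + w)" for k
  define d where "d x y = \<bar>f x - f y\<bar>" for x y
  define X :: "nat set" where "X = {0, 1, 2}"
  define v\<^sub>1 :: "nat \<Rightarrow> nat" where "v\<^sub>1 i = (if i = 1 then 1 else 0)" for i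
  define v\<^sub>2 :: "nat \<Rightarrow> nat" where "v\<^sub>2 i = (if i = 1 then 0 else 1)" for i
  have met: "metric_on X d"
    unfolding d_def[abs_def] by (rule metric_on_line) (use w in \<open>auto simp: X_def f_def\<close>)
  have dist: "d 0 0 = 0" "d 1 1 = 0" "d 2 2 = 0" "d 0 1 = 1" "d 1 0 = 1"
    "d 1 2 = w" "d 2 1 = w" "d 0 2 = 1 + w" "d 2 0 = 1 + w"
    using w by (simp_all add: d_def f_def)
  have "\<not> \<tau> * (1 + w) \<le> 0" using w(2) \<open>1 \<le> \<tau>\<close> by (simp add: not_le)
  have two: "{1..2::nat} = {1, 2}" by auto
  have sets: "setA \<tau> d 2 v\<^sub>1 2 0 = {1}" "setB \<tau> d 2 v\<^sub>1 2 0 = {2}"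
    "setA \<tau> d 2 v\<^sub>2 0 2 = {1}" "setB \<tau> d 2 v\<^sub>2 0 2 = {2}"
    using w \<open>\<tau> * w < 1\<close> \<open>w < \<tau>\<close> \<open>\<not> \<tau> * (1 + w) \<le> 0\<close>
    by (auto simp: setA_def setB_def two v\<^sub>1_def v\<^sub>2_def dist dist[unfolded One_nat_def])
  have SC: "SC d 2 v\<^sub>1 2 = 1 + 2 * w" "SC d 2 v\<^sub>1 0 = 1"
    "SC d 2 v\<^sub>2 2 = 1 + 2 * w" "SC d 2 v\<^sub>2 0 = 1"
    unfolding SC_def two by (simp_all add: v\<^sub>1_def v\<^sub>2_def dist dist[unfolded One_nat_def])
  show ?thesis
  proof (rule mechanism_distortion_gt_of_indistinguishable)
    show "valid_instance X d 2 v\<^sub>1 2 0" "valid_instance X d 2 v\<^sub>2 0 2"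
      using met SC w by (auto simp: valid_instance_def X_def v\<^sub>1_def v\<^sub>2_def)
    show "distortion d 2 v\<^sub>1 2 0 2 > \<rho>" "distortion d 2 v\<^sub>2 0 2 2 > \<rho>"
      using SC w by (simp_all add: distortion_def)
  qed (use sets in simp_all)
qed

lemma mechanism_distortion_gt_of_lt_tau:
  fixes \<tau> \<rho> :: real
  assumes "1 \<le> \<rho>" "\<rho> < \<tau>"
  shows "\<exists>(X :: nat set) d n v P Q. valid_instance X d n v P Q \<and>
           distortion d n v P Q (if mech n (setA \<tau> d n v P Q) (setB \<tau> d n v P Q) then P else Q) > \<rho>"
proof -
  obtain x where x: "\<rho> < x" "x < \<tau>" using dense assms(2) by blast
  \<comment> \<open>the single voter sits at point \<open>0\<close>, between candidates at distances \<open>1\<close> and \<open>x\<close>\<close>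
  define f :: "nat \<Rightarrow> real" where "f k = (if k = 0 then 0 else if k = 1 then 1 else - x)" for k
  define d where "d x y = \<bar>f x - f y\<bar>" for x y
  define X :: "nat set" where "X = {0, 1, 2}"
  define v :: "nat \<Rightarrow> nat" where "v i = 0" for i
  have "1 < x" "1 < \<tau> * x" using x assms(1) by (auto intro: less_1_mult)
  have met: "metric_on X d"
    unfolding d_def[abs_def] by (rule metric_on_line) (use \<open>1 < x\<close> in \<open>auto simp: X_def f_def\<close>)
  have sets: "setA \<tau> d 1 v 2 1 = {}" "setB \<tau> d 1 v 2 1 = {}"
    "setA \<tau> d 1 v 1 2 = {}" "setB \<tau> d 1 v 1 2 = {}"
    using x \<open>1 < x\<close> \<open>1 < \<tau> * x\<close> by (auto simp: setA_def setB_def d_def f_def v_def)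
  have SC: "SC d 1 v 1 = 1" "SC d 1 v 2 = x"
    using \<open>1 < x\<close> by (simp_all add: SC_def d_def f_def v_def)
  show ?thesis
  proof (rule mechanism_distortion_gt_of_indistinguishable)
    show "valid_instance X d 1 v 2 1" "valid_instance X d 1 v 1 2"
      using met SC \<open>1 < x\<close> by (auto simp: valid_instance_def X_def v_def)
    show "distortion d 1 v 2 1 2 > \<rho>" "distortion d 1 v 1 2 2 > \<rho>"
      using SC x \<open>1 < x\<close> by (simp_all add: distortion_def)
  qed (use sets in simp_all)
qed

theorem mainTheorem7:
  fixes \<tau> :: real
  assumes "\<tau> \<ge> 1"
  shows "(\<forall>(X :: 'a set) d n v P Q. valid_instance X d n v P Q \<longrightarrow>
            distortion d n v P Q (WMR3 \<tau> d n v P Q) \<le> max ((\<tau> + 2) / \<tau>) \<tau>)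
       \<and> (\<forall>mech :: nat \<Rightarrow> nat set \<Rightarrow> nat set \<Rightarrow> bool. \<forall>\<rho> < max ((\<tau> + 2) / \<tau>) \<tau>.
            \<exists>(X :: nat set) d n v P Q. valid_instance X d n v P Q \<and>
              distortion d n v P Q
                (if mech n (setA \<tau> d n v P Q) (setB \<tau> d n v P Q) then P else Q) > \<rho>)"
proof (intro conjI allI impI)
  fix X :: "'a set" and d n v P Q
  assume "valid_instance X d n v P Q"
  then show "distortion d n v P Q (WMR3 \<tau> d n v P Q) \<le> max ((\<tau> + 2) / \<tau>) \<tau>"
    using assms by (rule distortion_WMR3_le[rotated])
next
  fix mech :: "nat \<Rightarrow> nat set \<Rightarrow> nat set \<Rightarrow> bool" and \<rho> :: real
  assume \<rho>: "\<rho> < max ((\<tau> + 2) / \<tau>) \<tau>"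
  have "1 < (\<tau> + 2) / \<tau>" using assms by (simp add: field_simps)
  then consider "\<rho> < (\<tau> + 2) / \<tau>" | "1 \<le> \<rho>" "\<rho> < \<tau>" using \<rho> by linarith
  then show "\<exists>(X :: nat set) d n v P Q. valid_instance X d n v P Q \<and>
      distortion d n v P Q (if mech n (setA \<tau> d n v P Q) (setB \<tau> d n v P Q) then P else Q) > \<rho>"
    by cases (use assms mechanism_distortion_gt_of_lt_ratio mechanism_distortion_gt_of_lt_tau in blast)+
qed

end
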